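(* Let $\iota$ be the base type. There is no closed term $\cdot\vdash t:\iota\to\Diamond\iota$ in $\lambda^{S}$ or in $\lambda^{SJ}$ (so axiom R, $A\to\Diamond A$, is not derivable in these calculi), and there is no closed term $\cdot\vdash t:\Diamond\Diamond\iota\to\Diamond\iota$ in $\lambda^{S}$ or in $\lambda^{SR}$ (so axiom J, $\Diamond\Diamond A\to\Diamond A$, is not derivable in these calculi).
   Context: Types: $A,B ::= \iota \mid 1 \mid A\times B \mid A\to B \mid \Diamond A$ ($\iota$ a base type); contexts are lists of distinct typed variables, $\cdot$ the empty context. Simply typed terms: variables, $()$, $\langle t,u\rangle$, $\mathsf{fst}\,t$, $\mathsf{snd}\,t$, $\lambda x.t$, $t\,u$ with the standard typing rules. Modal term formers: (letmap) if $\Gamma\vdash t:\Diamond A$ and $\Gamma,x:A\vdash u:B$ then $\Gamma\vdash\mathsf{letmap}\ x=t\ \mathsf{in}\ u:\Diamond B$; (ret) if $\Gamma\vdash t:A$ then $\Gamma\vdash\mathsf{ret}\,t:\Diamond A$; (let) if $\Gamma\vdash t:\Diamond A$ and $\Gamma,x:A\vdash u:\Diamond B$ then $\Gamma\vdash\mathsf{let}\ x=t\ \mathsf{in}\ u:\Diamond B$. The calculus $\lambda^{S}$ has the simply typed terms plus letmap; $\lambda^{SR}$ has letmap and ret; $\lambda^{SJ}$ has letmap and let. *)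

theory Defs
  imports Main
begin

datatype ty = Iota | Unit | Prod ty ty | Fun ty ty | Dia ty

type_synonym var = nat

datatype tm =
    Var var
  | UnitTm
  | Pair tm tm
  | Fst tm
  | Snd tm
  | Lam var tm
  | App tm tm
  | LetMap var tm tm
  | Ret tm
  | Let var tm tm

datatype calculus = CS | CSR | CSJ

type_synonym ctx = "(var \<times> ty) list"

text \<open>Typing judgement  L ; Gamma |- t : A  for calculus L.  Contexts are lists
  of distinct typed variables; Gamma, x:A is  Gamma @ [(x,A)]  with x fresh.\<close>
inductive typing :: "calculus \<Rightarrow> ctx \<Rightarrow> tm \<Rightarrow> ty \<Rightarrow> bool" where
  T_Var: "distinct (map fst \<Gamma>) \<Longrightarrow> (x, A) \<in> set \<Gamma> \<Longrightarrow> typing L \<Gamma> (Var x) A"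
| T_Unit: "distinct (map fst \<Gamma>) \<Longrightarrow> typing L \<Gamma> UnitTm Unit"
| T_Pair: "typing L \<Gamma> t A \<Longrightarrow> typing L \<Gamma> u B \<Longrightarrow> typing L \<Gamma> (Pair t u) (Prod A B)"
| T_Fst: "typing L \<Gamma> t (Prod A B) \<Longrightarrow> typing L \<Gamma> (Fst t) A"
| T_Snd: "typing L \<Gamma> t (Prod A B) \<Longrightarrow> typing L \<Gamma> (Snd t) B"
| T_Lam: "x \<notin> set (map fst \<Gamma>) \<Longrightarrow> typing L (\<Gamma> @ [(x, A)]) t B
          \<Longrightarrow> typing L \<Gamma> (Lam x t) (Fun A B)"
| T_App: "typing L \<Gamma> t (Fun A B) \<Longrightarrow> typing L \<Gamma> u A \<Longrightarrow> typing L \<Gamma> (App t u) B"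
| T_LetMap: "typing L \<Gamma> t (Dia A) \<Longrightarrow> x \<notin> set (map fst \<Gamma>)
          \<Longrightarrow> typing L (\<Gamma> @ [(x, A)]) u B \<Longrightarrow> typing L \<Gamma> (LetMap x t u) (Dia B)"
| T_Ret: "L = CSR \<Longrightarrow> typing L \<Gamma> t A \<Longrightarrow> typing L \<Gamma> (Ret t) (Dia A)"
| T_Let: "L = CSJ \<Longrightarrow> typing L \<Gamma> t (Dia A) \<Longrightarrow> x \<notin> set (map fst \<Gamma>)
          \<Longrightarrow> typing L (\<Gamma> @ [(x, A)]) u (Dia B) \<Longrightarrow> typing L \<Gamma> (Let x t u) (Dia B)"

end

theory Submission
  imports Defs "HOL-Library.Extended_Nat"
begin

text \<open>Types are interpreted in a chain with top, read as a Goedel--Heyting algebra,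
  and \<open>\<Diamond>\<close> as a monotone operator \<open>j\<close> with strength \<open>j a \<sqinter> b \<le> j (a \<sqinter> b)\<close>; this
  validates letmap. Rule ret additionally needs \<open>j\<close> inflationary and rule let needs
  \<open>j (j a) \<le> j a\<close>. On \<open>enat\<close>, the constant \<open>0\<close> operator satisfies everything but
  inflationarity and refutes \<open>\<iota> \<rightarrow> \<Diamond>\<iota>\<close>, while \<open>eSuc\<close> satisfies everything but
  \<open>j (j a) \<le> j a\<close> and refutes \<open>\<Diamond>\<Diamond>\<iota> \<rightarrow> \<Diamond>\<iota>\<close>.\<close>

definition goedel_imp :: "'a::{linorder,order_top} \<Rightarrow> 'a \<Rightarrow> 'a" where
  "goedel_imp a b = (if a \<le> b then top else b)"

lemma le_goedel_imp_iff: "c \<le> goedel_imp a b \<longleftrightarrow> min c a \<le> b"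
  by (auto simp: goedel_imp_def min_def)

definition strong :: "('a::linorder \<Rightarrow> 'a) \<Rightarrow> bool" where
  "strong j \<longleftrightarrow> (\<forall>a b. min (j a) b \<le> j (min a b))"

definition valid_modality :: "calculus \<Rightarrow> ('a::linorder \<Rightarrow> 'a) \<Rightarrow> bool" where
  "valid_modality L j \<longleftrightarrow> mono j \<and> strong j
     \<and> (L = CSR \<longrightarrow> (\<forall>a. a \<le> j a)) \<and> (L = CSJ \<longrightarrow> (\<forall>a. j (j a) \<le> j a))"

fun ty_sem :: "('a::{linorder,order_top} \<Rightarrow> 'a) \<Rightarrow> 'a \<Rightarrow> ty \<Rightarrow> 'a" where
  "ty_sem j i Iota = i"
| "ty_sem j i Unit = top"
| "ty_sem j i (Prod A B) = min (ty_sem j i A) (ty_sem j i B)"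
| "ty_sem j i (Fun A B) = goedel_imp (ty_sem j i A) (ty_sem j i B)"
| "ty_sem j i (Dia A) = j (ty_sem j i A)"

fun ctx_sem :: "('a::{linorder,order_top} \<Rightarrow> 'a) \<Rightarrow> 'a \<Rightarrow> ctx \<Rightarrow> 'a" where
  "ctx_sem j i [] = top"
| "ctx_sem j i (xA # \<Gamma>) = min (ty_sem j i (snd xA)) (ctx_sem j i \<Gamma>)"

lemma ctx_sem_snoc [simp]: "ctx_sem j i (\<Gamma> @ [(x, A)]) = min (ctx_sem j i \<Gamma>) (ty_sem j i A)"
  by (induction \<Gamma>) (auto simp: min.left_commute min.commute)

lemma ctx_sem_le_member: "(x, A) \<in> set \<Gamma> \<Longrightarrow> ctx_sem j i \<Gamma> \<le> ty_sem j i A"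
  by (induction \<Gamma>) (auto intro: min.coboundedI2)

lemma letmap_sound:
  assumes "mono j" "strong j" "c \<le> j a" "min c a \<le> b"
  shows "c \<le> j b"
proof -
  have "c \<le> min (j a) c" using assms(3) by simp
  also have "\<dots> \<le> j (min a c)" using assms(2) by (simp add: strong_def)
  also have "\<dots> \<le> j b" using assms(1,4) by (simp add: monoD min.commute)
  finally show ?thesis .
qed

theorem typing_sound:
  assumes "typing L \<Gamma> t A" "valid_modality L j"
  shows "ctx_sem j i \<Gamma> \<le> ty_sem j i A"
  using assms
proof (induction rule: typing.induct)
  case (T_Var \<Gamma> x A L)
  then show ?case by (simp add: ctx_sem_le_member)
next
  case (T_Unit \<Gamma> L)
  then show ?case by simp
next
  case (T_Pair L \<Gamma> t A u B)
  then show ?case by simp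
next
  case (T_Fst L \<Gamma> t A B)
  then show ?case by (simp add: min.boundedE)
next
  case (T_Snd L \<Gamma> t A B)
  then show ?case by (simp add: min.boundedE)
next
  case (T_Lam x \<Gamma> L A t B)
  then show ?case by (simp add: le_goedel_imp_iff)
next
  case (T_App L \<Gamma> t A B u)
  then have "min (ctx_sem j i \<Gamma>) (ty_sem j i A) \<le> ty_sem j i B"
    by (simp add: le_goedel_imp_iff)
  with T_App show ?case by (simp add: min_def split: if_splits)
next
  case (T_LetMap L \<Gamma> t A x u B)
  show ?case unfolding ty_sem.simps
    by (rule letmap_sound[of j _ "ty_sem j i A"]) (use T_LetMap in \<open>auto simp: valid_modality_def\<close>)
next
  case (T_Ret L \<Gamma> t A)
  then show ?case by (auto simp: valid_modality_def intro: order_trans)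
next
  case (T_Let L \<Gamma> t A x u B)
  have "ctx_sem j i \<Gamma> \<le> j (j (ty_sem j i B))"
    by (rule letmap_sound[of j _ "ty_sem j i A"]) (use T_Let in \<open>auto simp: valid_modality_def\<close>)
  with T_Let show ?case by (auto simp: valid_modality_def intro: order_trans)
qed

corollary closed_typing_sound:
  "typing L [] t A \<Longrightarrow> valid_modality L j \<Longrightarrow> ty_sem j i A = top"
  using typing_sound[of L "[]" t A j i] by (simp add: top.extremum_unique)

lemma no_closed_term_R:
  assumes "L \<noteq> CSR"
  shows "\<nexists>t. typing L [] t (Fun Iota (Dia Iota))"
proof -
  have "valid_modality L (\<lambda>_. 0 :: enat)"
    using assms by (simp add: valid_modality_def strong_def mono_def)
  moreover have "ty_sem (\<lambda>_. 0) (\<infinity>::enat) (Fun Iota (Dia Iota)) \<noteq> top"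
    by (simp add: goedel_imp_def top_enat_def)
  ultimately show ?thesis using closed_typing_sound by blast
qed

lemma no_closed_term_J:
  assumes "L \<noteq> CSJ"
  shows "\<nexists>t. typing L [] t (Fun (Dia (Dia Iota)) (Dia Iota))"
proof -
  have "valid_modality L eSuc"
    using assms by (auto simp: valid_modality_def strong_def mono_def min_def
        intro: order_trans[OF ile_eSuc])
  moreover have "ty_sem eSuc 0 (Fun (Dia (Dia Iota)) (Dia Iota)) \<noteq> top"
    by (simp add: goedel_imp_def top_enat_def zero_enat_def eSuc_enat)
  ultimately show ?thesis using closed_typing_sound by blast
qed

theorem corollary5p3:
  shows "(\<nexists>t. typing CS [] t (Fun Iota (Dia Iota)))
       \<and> (\<nexists>t. typing CSJ [] t (Fun Iota (Dia Iota)))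
       \<and> (\<nexists>t. typing CS [] t (Fun (Dia (Dia Iota)) (Dia Iota)))
       \<and> (\<nexists>t. typing CSR [] t (Fun (Dia (Dia Iota)) (Dia Iota)))"
  using no_closed_term_R[of CS] no_closed_term_R[of CSJ]
    no_closed_term_J[of CS] no_closed_term_J[of CSR] by simp

end
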